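(* Let $D$ be a finite set of games between models $m_0,\dots,m_{k-1}$ such that there exists one model that has played every other model at least once in $D$. For a rating vector $\mathbf{R}=(R^{m_0},\dots,R^{m_{k-1}})\in\mathbb{R}^k$ define the logistic loss $$\mathcal{L}(D,\mathbf{R})=\sum_{g\in D}\Big[-g_r\log \operatorname{sig}\Big(\tfrac{R^{g_{m_a}}-R^{g_{m_b}}}{400}\Big)-(1-g_r)\log\Big(1-\operatorname{sig}\Big(\tfrac{R^{g_{m_a}}-R^{g_{m_b}}}{400}\Big)\Big)\Big],$$ with $\operatorname{sig}(x)=1/(1+e^{-x})$. If $\mathbf{R}_1$ and $\mathbf{R}_2$ both minimize $\mathbf{R}\mapsto\mathcal{L}(D,\mathbf{R})$ over $\mathbb{R}^k$, then $\mathbf{R}_1-\mathbf{R}_2$ is a constant vector (all its entries are equal).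
   Context: Each game $g\in D$ consists of two distinct models $g_{m_a},g_{m_b}$ among $m_0,\dots,m_{k-1}$ and a result $g_r\in\{0,\tfrac12,1\}$ ($1$ if $g_{m_a}$ wins, $0$ if it loses, $\tfrac12$ for a draw). *)

theory Defs
  imports Complex_Main
begin

definition sig :: "real \<Rightarrow> real" where
  "sig x = 1 / (1 + exp (- x))"

text \<open>Games are elements of an arbitrary index set D (so repeated games are allowed);
  ma g, mb g are the indices of the two models, res g the result.
  Ratings are functions nat => real, of which only entries 0..k-1 matter.\<close>
definition elo_loss ::
  "'g set \<Rightarrow> ('g \<Rightarrow> nat) \<Rightarrow> ('g \<Rightarrow> nat) \<Rightarrow> ('g \<Rightarrow> real) \<Rightarrow> (nat \<Rightarrow> real) \<Rightarrow> real" where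
  "elo_loss D ma mb res R =
     (\<Sum>g\<in>D. - res g * ln (sig ((R (ma g) - R (mb g)) / 400))
             - (1 - res g) * ln (1 - sig ((R (ma g) - R (mb g)) / 400)))"

end

theory Submission
  imports Defs
begin

text \<open>Each summand of the loss is \<open>r \<cdot> softplus (-x) + (1 - r) \<cdot> softplus x\<close> with
  \<open>softplus x = ln (1 + e\<^sup>x)\<close> and \<open>x\<close> the scaled rating difference of the game; for
  \<open>0 \<le> r \<le> 1\<close> this is strictly convex in \<open>x\<close>. Hence if two minimisers gave some game
  different rating differences, their average would have strictly smaller loss. So all
  minimisers give every game the same rating difference, i.e. \<open>R\<^sub>1 - R\<^sub>2\<close> takes equal values
  at the two players of each game, and a model that met every other model forces it to be
  constant.\<close>

definition softplus :: "real \<Rightarrow> real" where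
  "softplus x = ln (1 + exp x)"

lemma ln_sig: "ln (sig x) = - softplus (- x)"
  unfolding sig_def softplus_def by (simp add: ln_div add_pos_pos)

lemma ln_one_minus_sig: "ln (1 - sig x) = - softplus x"
proof -
  have "0 < 1 + exp x"
    using exp_gt_zero[of x] by linarith
  then have "1 - sig x = 1 / (1 + exp x)"
    unfolding sig_def by (simp add: field_simps exp_minus)
  then show ?thesis
    unfolding softplus_def by (simp add: ln_div add_pos_pos)
qed

lemma softplus_midpoint_le: "2 * softplus ((x + y) / 2) \<le> softplus x + softplus y"
  and softplus_midpoint_less: "x \<noteq> y \<Longrightarrow> 2 * softplus ((x + y) / 2) < softplus x + softplus y"
proof -
  define a b where "a = exp (x / 2)" and "b = exp (y / 2)"
  have "0 < 1 + a * b"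
    unfolding a_def b_def by (simp add: add_pos_pos)
  then have lhs: "2 * softplus ((x + y) / 2) = ln ((1 + a * b)\<^sup>2)"
    using ln_realpow[of "1 + a * b" 2]
    by (simp add: softplus_def a_def b_def add_divide_distrib flip: exp_add)
  have "exp x = a\<^sup>2" "exp y = b\<^sup>2"
    unfolding a_def b_def by (simp_all add: power2_eq_square flip: exp_add)
  moreover have "0 < 1 + a\<^sup>2" "0 < 1 + b\<^sup>2"
    by (simp_all add: add_pos_nonneg)
  ultimately have rhs: "softplus x + softplus y = ln ((1 + a\<^sup>2) * (1 + b\<^sup>2))"
    unfolding softplus_def by (simp add: ln_mult)
  \<comment> \<open>Cauchy-Schwarz in the form of Lagrange's identity\<close>
  have lagrange: "(1 + a\<^sup>2) * (1 + b\<^sup>2) = (1 + a * b)\<^sup>2 + (a - b)\<^sup>2"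
    by (simp add: power2_eq_square algebra_simps)
  have pos: "0 < (1 + a * b)\<^sup>2"
    using \<open>0 < 1 + a * b\<close> by simp
  show "2 * softplus ((x + y) / 2) \<le> softplus x + softplus y"
    unfolding lhs rhs lagrange using pos
    by (intro ln_le_cancel_iff[THEN iffD2] add_pos_nonneg) auto
  assume "x \<noteq> y"
  then have "(a - b)\<^sup>2 > 0"
    unfolding a_def b_def by simp
  then show "2 * softplus ((x + y) / 2) < softplus x + softplus y"
    unfolding lhs rhs lagrange using pos
    by (intro ln_less_cancel_iff[THEN iffD2] add_pos_nonneg) auto
qed

definition logit_loss :: "real \<Rightarrow> real \<Rightarrow> real" where
  "logit_loss r x = r * softplus (- x) + (1 - r) * softplus x"

lemma elo_loss_eq_sum_logit_loss:
  "elo_loss D ma mb res R = (\<Sum>g\<in>D. logit_loss (res g) ((R (ma g) - R (mb g)) / 400))"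
  unfolding elo_loss_def logit_loss_def ln_sig ln_one_minus_sig by simp

lemma logit_loss_midpoint_le:
  assumes "0 \<le> r" "r \<le> 1"
  shows "2 * logit_loss r ((x + y) / 2) \<le> logit_loss r x + logit_loss r y"
proof -
  have "2 * softplus (- ((x + y) / 2)) \<le> softplus (- x) + softplus (- y)"
    using softplus_midpoint_le[of "- x" "- y"] by (simp add: minus_divide_left)
  then have "r * (2 * softplus (- ((x + y) / 2))) \<le> r * (softplus (- x) + softplus (- y))"
    using assms by (simp add: mult_left_mono)
  moreover have "(1 - r) * (2 * softplus ((x + y) / 2)) \<le> (1 - r) * (softplus x + softplus y)"
    using softplus_midpoint_le assms by (simp add: mult_left_mono)
  ultimately show ?thesis
    unfolding logit_loss_def by (simp add: algebra_simps)
qed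

lemma logit_loss_midpoint_less:
  assumes "0 \<le> r" "r \<le> 1" "x \<noteq> y"
  shows "2 * logit_loss r ((x + y) / 2) < logit_loss r x + logit_loss r y"
proof -
  have neg_le: "r * (2 * softplus (- ((x + y) / 2))) \<le> r * (softplus (- x) + softplus (- y))"
    and neg_less: "r > 0 \<Longrightarrow>
      r * (2 * softplus (- ((x + y) / 2))) < r * (softplus (- x) + softplus (- y))"
    using softplus_midpoint_le[of "- x" "- y"] softplus_midpoint_less[of "- x" "- y"] assms
    by (simp_all add: minus_divide_left mult_left_mono)
  have pos_le: "(1 - r) * (2 * softplus ((x + y) / 2)) \<le> (1 - r) * (softplus x + softplus y)"
    and pos_less: "r < 1 \<Longrightarrow>
      (1 - r) * (2 * softplus ((x + y) / 2)) < (1 - r) * (softplus x + softplus y)"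
    using softplus_midpoint_le softplus_midpoint_less[of x y] assms
    by (simp_all add: mult_left_mono)
  have "r > 0 \<or> r < 1"
    by linarith
  then show ?thesis
    using neg_le neg_less pos_le pos_less unfolding logit_loss_def by (auto simp: algebra_simps)
qed

lemma elo_loss_midpoint_less:
  fixes R1 R2 :: "nat \<Rightarrow> real"
  assumes "finite D" and res: "\<forall>g\<in>D. 0 \<le> res g \<and> res g \<le> 1"
    and "h \<in> D" and "R1 (ma h) - R1 (mb h) \<noteq> R2 (ma h) - R2 (mb h)"
  shows "2 * elo_loss D ma mb res (\<lambda>i. (R1 i + R2 i) / 2)
           < elo_loss D ma mb res R1 + elo_loss D ma mb res R2"
proof -
  define x where "x R g = (R (ma g) - R (mb g)) / 400" for R :: "nat \<Rightarrow> real" and g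
  have x_mid: "x (\<lambda>i. (R1 i + R2 i) / 2) g = (x R1 g + x R2 g) / 2" for g
    unfolding x_def by (simp add: field_simps)
  have "(\<Sum>g\<in>D. 2 * logit_loss (res g) (x (\<lambda>i. (R1 i + R2 i) / 2) g))
        < (\<Sum>g\<in>D. logit_loss (res g) (x R1 g) + logit_loss (res g) (x R2 g))"
    unfolding x_mid
  proof (rule sum_strict_mono_ex1[OF \<open>finite D\<close>])
    show "\<forall>g\<in>D. 2 * logit_loss (res g) ((x R1 g + x R2 g) / 2)
                 \<le> logit_loss (res g) (x R1 g) + logit_loss (res g) (x R2 g)"
      using res logit_loss_midpoint_le by blast
    have "x R1 h \<noteq> x R2 h"
      using assms(4) unfolding x_def by simp
    then show "\<exists>g\<in>D. 2 * logit_loss (res g) ((x R1 g + x R2 g) / 2)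
                 < logit_loss (res g) (x R1 g) + logit_loss (res g) (x R2 g)"
      using res \<open>h \<in> D\<close> logit_loss_midpoint_less by blast
  qed
  then show ?thesis
    unfolding elo_loss_eq_sum_logit_loss x_def by (simp add: sum.distrib sum_distrib_left)
qed

lemma elo_minimizers_same_differences:
  fixes R1 R2 :: "nat \<Rightarrow> real"
  assumes "finite D" and "\<forall>g\<in>D. 0 \<le> res g \<and> res g \<le> 1"
    and min1: "\<forall>R. elo_loss D ma mb res R1 \<le> elo_loss D ma mb res R"
    and min2: "\<forall>R. elo_loss D ma mb res R2 \<le> elo_loss D ma mb res R"
    and "g \<in> D"
  shows "R1 (ma g) - R2 (ma g) = R1 (mb g) - R2 (mb g)"
proof (rule ccontr)
  assume "R1 (ma g) - R2 (ma g) \<noteq> R1 (mb g) - R2 (mb g)"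
  then have "R1 (ma g) - R1 (mb g) \<noteq> R2 (ma g) - R2 (mb g)"
    by (simp add: algebra_simps)
  then have "2 * elo_loss D ma mb res (\<lambda>i. (R1 i + R2 i) / 2)
               < elo_loss D ma mb res R1 + elo_loss D ma mb res R2"
    by (rule elo_loss_midpoint_less[OF assms(1,2) \<open>g \<in> D\<close>])
  moreover have "elo_loss D ma mb res R1 \<le> elo_loss D ma mb res (\<lambda>i. (R1 i + R2 i) / 2)"
    and "elo_loss D ma mb res R2 \<le> elo_loss D ma mb res (\<lambda>i. (R1 i + R2 i) / 2)"
    using min1 min2 by simp_all
  ultimately show False
    by linarith
qed

lemma constant_if_equal_across_hub:
  fixes d :: "nat \<Rightarrow> 'a"
  assumes equal: "\<forall>g\<in>D. d (ma g) = d (mb g)"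
    and hub: "\<exists>i<k. \<forall>j<k. j \<noteq> i \<longrightarrow>
           (\<exists>g\<in>D. (ma g = i \<and> mb g = j) \<or> (ma g = j \<and> mb g = i))"
  shows "\<exists>c. \<forall>j<k. d j = c"
proof -
  obtain i where "i < k" and met: "\<forall>j<k. j \<noteq> i \<longrightarrow>
      (\<exists>g\<in>D. (ma g = i \<and> mb g = j) \<or> (ma g = j \<and> mb g = i))"
    using hub by blast
  have "d j = d i" if "j < k" for j
  proof (cases "j = i")
    case False
    then obtain g where "g \<in> D" and "(ma g = i \<and> mb g = j) \<or> (ma g = j \<and> mb g = i)"
      using met \<open>j < k\<close> by blast
    then show ?thesis
      using equal by auto
  qed simp
  then show ?thesis
    by blast
qed

theorem mainTheorem2:
  fixes D :: "'g set" and ma mb :: "'g \<Rightarrow> nat" and res :: "'g \<Rightarrow> real"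
    and k :: nat and R1 R2 :: "nat \<Rightarrow> real"
  assumes "finite D"
    and "\<forall>g\<in>D. ma g < k \<and> mb g < k \<and> ma g \<noteq> mb g"
    and "\<forall>g\<in>D. res g \<in> {0, 1/2, 1}"
    and "\<exists>i<k. \<forall>j<k. j \<noteq> i \<longrightarrow>
           (\<exists>g\<in>D. (ma g = i \<and> mb g = j) \<or> (ma g = j \<and> mb g = i))"
    and "\<forall>R. elo_loss D ma mb res R1 \<le> elo_loss D ma mb res R"
    and "\<forall>R. elo_loss D ma mb res R2 \<le> elo_loss D ma mb res R"
  shows "\<exists>c. \<forall>i<k. R1 i - R2 i = c"
proof -
  have "\<forall>g\<in>D. 0 \<le> res g \<and> res g \<le> 1"
    using assms(3) by auto
  then have "\<forall>g\<in>D. R1 (ma g) - R2 (ma g) = R1 (mb g) - R2 (mb g)"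
    using elo_minimizers_same_differences[OF assms(1) _ assms(5,6)] by simp
  then show ?thesis
    by (rule constant_if_equal_across_hub[where d = "\<lambda>i. R1 i - R2 i", OF _ assms(4)])
qed

end
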